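(* Let $\Gamma$ be a convex digital polygon and let $[V_kV_{k+1}]$ be a supporting edge of slope $a/b$ made of $f$ patterns $(a,b)$, and let $MS$ be the unique maximal segment containing it. Then \[ \mathcal{L}^1(V_kV_{k+1})\le\mathcal{L}^1(MS)\le\frac{f+2}{f}\,\mathcal{L}^1(V_kV_{k+1})-2 \quad\text{and}\quad \tfrac13\mathcal{L}^1(MS)\le\mathcal{L}^1(V_kV_{k+1})\le\mathcal{L}^1(MS)\le 3\,\mathcal{L}^1(V_kV_{k+1}). \]
   Context: A standard line with slope $a/b$ and shift $\mu$ ($\gcd(a,b)=1$) is $\{(x,y)\in\mathbb{Z}^2:\mu\le ax-by<\mu+|a|+|b|\}$; upper leaning points have $ax-by=\mu$, lower leaning points $ax-by=\mu+|a|+|b|-1$. A pattern $(a,b)$ is the Freeman word between two consecutive upper leaning points. A convex digital polygon (CDP) is a finite $\Gamma\subset\mathbb{Z}^2$ with $\Gamma=\mathrm{Conv}(\Gamma)\cap\mathbb{Z}^2$; vertices $V_1,\dots,V_e$ (cyclic) form the minimal subset whose convex hull digitizes to $\Gamma$; the boundary points form a closed 4-connected contour through the vertices; the digital edge $[V_kV_{k+1}]$ is the contour portion from $V_k$ to $V_{k+1}$. A set of consecutive contour points is a DSS if it lies in a standard line; its leaning points are those of its characteristic line (the containing standard line with minimal $|a|+|b|$). A maximal segment is a DSS not extendable at either end by a contour point. A supporting edge is a digital edge whose two vertices are the leftmost and rightmost upper leaning points of some maximal segment. $\mathcal{L}^1$ is the number of unit steps (city-block length). First-octant conventions, polygon on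 the side of lower leaning points; other octants by symmetry. *)

theory Defs
  imports "HOL-Analysis.Analysis"
begin

type_synonym pt = "int \<times> int"

definition toR :: "pt \<Rightarrow> real \<times> real" where
  "toR p = (real_of_int (fst p), real_of_int (snd p))"

definition digitization :: "pt set \<Rightarrow> pt set" where
  "digitization W = {p. toR p \<in> convex hull (toR ` W)}"

definition cdp :: "pt set \<Rightarrow> bool" where
  "cdp \<Gamma> \<longleftrightarrow> finite \<Gamma> \<and> \<Gamma> = digitization \<Gamma>"

definition vertex_set :: "pt set \<Rightarrow> pt set \<Rightarrow> bool" where
  "vertex_set \<Gamma> V \<longleftrightarrow> V \<subseteq> \<Gamma> \<and> digitization V = \<Gamma> \<and>
     (\<forall>W. W \<subset> V \<longrightarrow> digitization W \<noteq> \<Gamma>)"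

definition adj4 :: "pt \<Rightarrow> pt \<Rightarrow> bool" where
  "adj4 p q \<longleftrightarrow> \<bar>fst p - fst q\<bar> + \<bar>snd p - snd q\<bar> = 1"

definition adj8 :: "pt \<Rightarrow> pt \<Rightarrow> bool" where
  "adj8 p q \<longleftrightarrow> p \<noteq> q \<and> \<bar>fst p - fst q\<bar> \<le> 1 \<and> \<bar>snd p - snd q\<bar> \<le> 1"

definition boundary_pts :: "pt set \<Rightarrow> pt set" where
  "boundary_pts \<Gamma> = {p \<in> \<Gamma>. \<exists>q. adj8 p q \<and> q \<notin> \<Gamma>}"

text \<open>The contour: a closed simple 4-connected curve, given as an n-periodic map
  c :: int => pt, through exactly the boundary points, traversed clockwise
  (negative signed area), so that the polygon lies on the right-hand side.\<close>
definition contour :: "pt set \<Rightarrow> (int \<Rightarrow> pt) \<Rightarrow> int \<Rightarrow> bool" where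
  "contour \<Gamma> c n \<longleftrightarrow> 0 < n \<and> (\<forall>i. c (i + n) = c i) \<and> (\<forall>i. adj4 (c i) (c (i + 1))) \<and>
     inj_on c {0..<n} \<and> range c = boundary_pts \<Gamma> \<and>
     (\<Sum>i\<in>{0..<n}. fst (c i) * snd (c (i + 1)) - fst (c (i + 1)) * snd (c i)) < 0"

definition std_line :: "int \<Rightarrow> int \<Rightarrow> int \<Rightarrow> pt set" where
  "std_line a b \<mu> = {p. \<mu> \<le> a * fst p - b * snd p \<and> a * fst p - b * snd p < \<mu> + \<bar>a\<bar> + \<bar>b\<bar>}"

definition in_std_line :: "pt set \<Rightarrow> int \<Rightarrow> int \<Rightarrow> int \<Rightarrow> bool" where
  "in_std_line S a b \<mu> \<longleftrightarrow> coprime a b \<and> S \<subseteq> std_line a b \<mu>"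

definition char_line :: "pt set \<Rightarrow> int \<Rightarrow> int \<Rightarrow> int \<Rightarrow> bool" where
  "char_line S a b \<mu> \<longleftrightarrow> in_std_line S a b \<mu> \<and>
     (\<forall>a' b' \<mu>'. in_std_line S a' b' \<mu>' \<longrightarrow> \<bar>a\<bar> + \<bar>b\<bar> \<le> \<bar>a'\<bar> + \<bar>b'\<bar>)"

definition upper_leaning :: "int \<Rightarrow> int \<Rightarrow> int \<Rightarrow> pt \<Rightarrow> bool" where
  "upper_leaning a b \<mu> p \<longleftrightarrow> a * fst p - b * snd p = \<mu>"

text \<open>A contour portion is given by an index interval [i..j] with j - i < n.
  It is a DSS if its points lie in a standard line.\<close>
definition is_dss :: "(int \<Rightarrow> pt) \<Rightarrow> int \<Rightarrow> int \<Rightarrow> int \<Rightarrow> bool" where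
  "is_dss c n i j \<longleftrightarrow> i \<le> j \<and> j - i < n \<and> (\<exists>a b \<mu>. in_std_line (c ` {i..j}) a b \<mu>)"

definition maximal_segment :: "(int \<Rightarrow> pt) \<Rightarrow> int \<Rightarrow> int \<Rightarrow> int \<Rightarrow> bool" where
  "maximal_segment c n i j \<longleftrightarrow> is_dss c n i j \<and> \<not> is_dss c n (i - 1) j \<and> \<not> is_dss c n i (j + 1)"

text \<open>Characteristic line of the portion [i..j], with (a,b) oriented so that (b,a) points
  in the traversal direction; since the contour is clockwise, the polygon then lies on the
  side of the lower leaning points (first-octant convention, other octants by symmetry).\<close>
definition oriented_char_line :: "(int \<Rightarrow> pt) \<Rightarrow> int \<Rightarrow> int \<Rightarrow> int \<Rightarrow> int \<Rightarrow> int \<Rightarrow> bool" where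
  "oriented_char_line c i j a b \<mu> \<longleftrightarrow> char_line (c ` {i..j}) a b \<mu> \<and>
     0 < b * (fst (c j) - fst (c i)) + a * (snd (c j) - snd (c i))"

definition digital_edge :: "pt set \<Rightarrow> (int \<Rightarrow> pt) \<Rightarrow> int \<Rightarrow> int \<Rightarrow> int \<Rightarrow> bool" where
  "digital_edge V c n p q \<longleftrightarrow> p < q \<and> q - p < n \<and> c p \<in> V \<and> c q \<in> V \<and>
     (\<forall>k. p < k \<and> k < q \<longrightarrow> c k \<notin> V)"

definition supporting_edge ::
  "pt set \<Rightarrow> (int \<Rightarrow> pt) \<Rightarrow> int \<Rightarrow> int \<Rightarrow> int \<Rightarrow> int \<Rightarrow> int \<Rightarrow> int \<Rightarrow> bool" where
  "supporting_edge V c n p q a b \<mu> \<longleftrightarrow> digital_edge V c n p q \<and>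
     (\<exists>s t. maximal_segment c n s t \<and> oriented_char_line c s t a b \<mu> \<and>
        s \<le> p \<and> q \<le> t \<and> upper_leaning a b \<mu> (c p) \<and> upper_leaning a b \<mu> (c q) \<and>
        (\<forall>k\<in>{s..t}. upper_leaning a b \<mu> (c k) \<longrightarrow> p \<le> k \<and> k \<le> q))"

text \<open>The portion [p..q] is made of f patterns (a,b): it contains exactly f+1 upper
  leaning points (consecutive upper leaning points delimit the patterns).\<close>
definition made_of_patterns :: "(int \<Rightarrow> pt) \<Rightarrow> int \<Rightarrow> int \<Rightarrow> int \<Rightarrow> int \<Rightarrow> int \<Rightarrow> nat \<Rightarrow> bool" where
  "made_of_patterns c p q a b \<mu> f \<longleftrightarrow> card {k \<in> {p..q}. upper_leaning a b \<mu> (c k)} = f + 1"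

text \<open>City-block length of the contour portion [i..j]: its number of unit steps.\<close>
definition L1 :: "int \<Rightarrow> int \<Rightarrow> real" where
  "L1 i j = real_of_int (j - i)"

end

theory Submission
  imports Defs
begin

text \<open>
  Let \<open>[s1..t1]\<close> be the maximal segment witnessing that the edge \<open>[p..q]\<close> is supporting,
  with characteristic line \<open>(a, b, \<mu>)\<close> and \<open>w = \<bar>a\<bar> + \<bar>b\<bar>\<close>. Along a digital straight
  segment only two perpendicular unit steps occur, so remainders are determined modulo \<open>w\<close> by
  the index: the upper leaning points are the indices congruent to \<open>p\<close> modulo \<open>w\<close>. Hence the
  edge has length \<open>f w\<close> and \<open>[s1..t1]\<close> overhangs it by less than \<open>w\<close> at each end, giving
  \<open>t1 - s1 \<le> (f + 2) w - 2\<close>.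

  A maximal segment \<open>[s..t]\<close> containing the edge is not longer: if it started before \<open>s1\<close>
  (or, after reflecting the contour, ended after \<open>t1\<close>), then \<open>[s1 - 1..t1]\<close> would be straight,
  against the maximality of \<open>[s1..t1]\<close>. Indeed the point \<open>c (s1 - 1)\<close> either lies in the strip;
  or its remainder is \<open>\<mu> - 1\<close>, and the line through it and the last upper leaning point
  contains the whole extended segment; or it lies further out, and then two subpaths of equal
  length whose remainders differ by \<open>2 w\<close> force both step directions to the same side of
  any line containing \<open>[s1 - 1..q]\<close>, which is impossible for a straight segment.
\<close>

section \<open>Integer arithmetic\<close>

lemma dvd_in_window_eq_0:
  fixes w x :: int
  assumes "w dvd x" "- w < x" "x < w"
  shows "x = 0"
proof (rule ccontr)
  assume "x \<noteq> 0"
  then have "0 < \<bar>x\<bar>" "\<bar>x\<bar> < w" using assms by auto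
  then show False using zdvd_not_zless assms(1) by (metis dvd_abs_iff)
qed

lemma coprime_nonzero_of_width:
  fixes a b :: int
  assumes "coprime a b" and "\<bar>a\<bar> + \<bar>b\<bar> \<ge> 2"
  shows "a \<noteq> 0" "b \<noteq> 0"
  using assms by auto

lemma coprime_add_self_int:
  fixes A B :: int
  assumes "coprime A B"
  shows "coprime A (A + B)"
proof (rule coprimeI)
  fix d
  assume "d dvd A" "d dvd A + B"
  then have "d dvd B" by (metis add_diff_cancel_left' dvd_diff)
  then show "is_unit d" using assms \<open>d dvd A\<close> by (meson coprime_common_divisor)
qed

lemma exists_last_in_interval:
  fixes m u e :: int
  assumes "m < u" "u \<le> e" "P u"
  obtains \<pi> where "m < \<pi>" "\<pi> \<le> e" "P \<pi>" "\<And>k. \<pi> < k \<Longrightarrow> k \<le> e \<Longrightarrow> \<not> P k"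
proof -
  define U where "U = {k \<in> {m<..e}. P k}"
  have "finite U" unfolding U_def by (rule finite_subset[of _ "{m<..e}"]) auto
  moreover have "u \<in> U" using assms by (simp add: U_def)
  ultimately have max: "Max U \<in> U" "\<And>k. k \<in> U \<Longrightarrow> k \<le> Max U" using Max_in Max_ge by blast+
  then have "m < Max U" "Max U \<le> e" "P (Max U)" by (simp_all add: U_def)
  moreover have "\<not> P k" if "Max U < k" "k \<le> e" for k
    using max(2)[of k] that \<open>m < Max U\<close> by (auto simp: U_def)
  ultimately show thesis by (rule that)
qed

lemma card_multiples_atLeastAtMost:
  fixes p q w :: int
  assumes "0 < w" "w dvd (q - p)" "p \<le> q"
  shows "int (card {k \<in> {p..q}. w dvd (k - p)}) = (q - p) div w + 1"
proof -
  define N where "N = (q - p) div w"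
  have q: "q - p = w * N" using assms(2) by (simp add: N_def)
  have "{k \<in> {p..q}. w dvd (k - p)} = (\<lambda>j. p + w * j) ` {0..N}"
  proof (intro equalityI subsetI)
    fix k assume k: "k \<in> {k \<in> {p..q}. w dvd (k - p)}"
    then obtain j where j: "k - p = w * j" by blast
    then have "0 \<le> w * j" "w * j \<le> w * N" using k q by auto
    then have "j \<in> {0..N}" using assms(1) by (simp add: zero_le_mult_iff)
    then show "k \<in> (\<lambda>j. p + w * j) ` {0..N}" using j by (auto intro!: image_eqI[of _ _ j])
  next
    fix k assume "k \<in> (\<lambda>j. p + w * j) ` {0..N}"
    then obtain j where k: "k = p + w * j" and "j \<in> {0..N}" by (rule imageE)
    then have j: "0 \<le> j" "j \<le> N" by simp_all
    have "w * j \<le> w * N" using mult_left_mono[of j N w] assms(1) j by simp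
    then have "p + w * j \<le> q" using q by linarith
    then show "k \<in> {k \<in> {p..q}. w dvd (k - p)}" using k j q assms(1) by auto
  qed
  moreover have "inj_on (\<lambda>j. p + w * j) {0..N}" using assms(1) by (auto simp: inj_on_def)
  moreover have "0 \<le> N" using assms by (simp add: N_def pos_imp_zdiv_nonneg_iff)
  ultimately show ?thesis by (simp add: card_image N_def)
qed

lemma image_reflect_atLeastAtMost:
  fixes c :: "int \<Rightarrow> 'a"
  shows "(\<lambda>k. c (- k)) ` {i..j} = c ` {- j..- i}"
proof -
  have "(\<lambda>k. c (- k)) ` {i..j} = c ` (uminus ` {i..j})" by (simp only: image_image)
  then show ?thesis by simp
qed

lemma parallelogram_not_in_strip:
  fixes v X Y Z \<mu> :: int
  assumes "{v, v + X, v + X + Z, v + Z} \<subseteq> {\<mu>..<\<mu> + \<bar>X\<bar> + \<bar>Y\<bar>}"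
    and "0 \<le> Y \<Longrightarrow> Y \<le> Z" "Y \<le> 0 \<Longrightarrow> Z \<le> Y"
  shows False
  using assms by (cases "X \<ge> 0"; cases "Y \<ge> 0") (simp_all add: abs_if; linarith)+

text \<open>The arithmetic core of the weakly exterior case: \<open>L\<close> is the remainder of a point for
  the new line, \<open>u\<close> its remainder for the old one (shifted to \<open>[1..w]\<close>), \<open>n\<close> its index
  and \<open>K\<close> the index of the last upper leaning point, both counted from the new first point.\<close>

lemma sheared_remainder_bounds:
  fixes w K u n L :: int
  assumes eq: "w * L = K * u - n" and "1 \<le> K" "1 \<le> u" "u \<le> w" "0 < n"
    and beyond: "K < n \<Longrightarrow> 2 \<le> u \<and> n - K < w"
  shows "0 \<le> L" "L < K"
proof -
  have w: "0 < w" using assms(3,4) by simp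
  have "w * L < K * u" using eq assms(5) by simp
  also have "\<dots> \<le> K * w" using mult_left_mono[of u w K] assms(2,4) by simp
  finally show "L < K" using mult_less_cancel_left_pos[OF w] by (simp add: mult.commute)
  show "0 \<le> L"
  proof (cases "K < n")
    case True
    then have "2 \<le> u" "n - K < w" using beyond by auto
    then have "1 \<le> K * (u - 1)" using mult_mono[of 1 K 1 "u - 1"] assms(2) by simp
    then have "w * (- 1) < w * L" using eq \<open>n - K < w\<close> by (simp add: algebra_simps)
    then show ?thesis using mult_less_cancel_left_pos[OF w, of "- 1" L] by simp
  next
    case False
    moreover have "K * 1 \<le> K * u" by (rule mult_left_mono) (use assms(2,3) in auto)
    ultimately have "0 \<le> w * L" using eq by simp
    then show ?thesis using w by (simp add: zero_le_mult_iff)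
  qed
qed

lemma length_ratio_bounds:
  fixes f :: nat and w E M :: int
  assumes E: "E = int f * w" "0 < E" and M: "E \<le> M" "M \<le> (int f + 2) * w - 2"
  shows "real_of_int E \<le> real_of_int M \<and> real_of_int M \<le> (real f + 2) / real f * real_of_int E - 2 \<and>
    real_of_int M / 3 \<le> real_of_int E \<and> real_of_int E \<le> real_of_int M \<and> real_of_int M \<le> 3 * real_of_int E"
proof -
  have f: "0 < real f" using E by (auto simp: zero_less_mult_iff)
  have "real_of_int M \<le> of_int ((int f + 2) * w - 2)" using M(2) by (simp only: of_int_le_iff)
  also have "\<dots> = (real f + 2) * w - 2" by simp
  also have "\<dots> = (real f + 2) / real f * E - 2" using E f by (simp add: field_simps)
  finally have upper: "M \<le> (real f + 2) / real f * E - 2" .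
  have "(int f + 2) * w \<le> 3 * (int f * w)"
    using E f by (simp add: algebra_simps zero_less_mult_iff)
  then have "M \<le> 3 * E" using E M by linarith
  then show ?thesis using M(1) upper by linarith
qed

section \<open>Remainders and unit steps\<close>

definition remainder :: "int \<Rightarrow> int \<Rightarrow> pt \<Rightarrow> int" where
  "remainder a b z = a * fst z - b * snd z"

definition step :: "(int \<Rightarrow> pt) \<Rightarrow> int \<Rightarrow> pt" where
  "step c k = c (k + 1) - c k"

definition unit_steps :: "pt set" where
  "unit_steps = {(1, 0), (-1, 0), (0, 1), (0, -1)}"

definition perp_steps :: "pt \<Rightarrow> pt \<Rightarrow> bool" where
  "perp_steps g h \<longleftrightarrow> g \<in> unit_steps \<and> h \<in> unit_steps \<and> h \<noteq> g \<and> h \<noteq> - g"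

lemma remainder_add [simp]: "remainder a b (x + y) = remainder a b x + remainder a b y"
  and remainder_diff [simp]: "remainder a b (x - y) = remainder a b x - remainder a b y"
  and remainder_uminus [simp]: "remainder a b (- x) = - remainder a b x"
  and remainder_neg_coeffs [simp]: "remainder (- a) (- b) x = - remainder a b x"
  by (simp_all add: remainder_def algebra_simps)

lemma remainder_succ: "remainder a b (c (k + 1)) = remainder a b (c k) + remainder a b (step c k)"
  by (simp add: step_def)

lemma steps_subsetD: "step c ` {x..<y} \<subseteq> S \<Longrightarrow> x \<le> k \<Longrightarrow> k < y \<Longrightarrow> step c k \<in> S"
  by (simp add: image_subset_iff)

lemma mem_std_line_iff:
  "z \<in> std_line a b \<mu> \<longleftrightarrow> \<mu> \<le> remainder a b z \<and> remainder a b z < \<mu> + \<bar>a\<bar> + \<bar>b\<bar>"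
  by (simp add: std_line_def remainder_def)

lemma std_line_remainder_bounds:
  assumes "c ` I \<subseteq> std_line a b \<mu>" and "k \<in> I"
  shows "\<mu> \<le> remainder a b (c k)" "remainder a b (c k) < \<mu> + (\<bar>a\<bar> + \<bar>b\<bar>)"
  using assms by (auto simp: image_subset_iff mem_std_line_iff)

lemma std_line_uminus: "std_line (- a) (- b) (- \<mu> - \<bar>a\<bar> - \<bar>b\<bar> + 1) = std_line a b \<mu>"
  by (auto simp: std_line_def)

lemma upper_leaning_iff_remainder: "upper_leaning a b \<mu> z \<longleftrightarrow> remainder a b z = \<mu>"
  by (simp add: upper_leaning_def remainder_def)

lemma in_std_line_subset: "in_std_line S a b \<mu> \<Longrightarrow> T \<subseteq> S \<Longrightarrow> in_std_line T a b \<mu>"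
  by (auto simp: in_std_line_def)

lemma unit_steps_cases:
  assumes "g \<in> unit_steps"
  obtains "g = (1, 0)" | "g = (-1, 0)" | "g = (0, 1)" | "g = (0, -1)"
  using assms unfolding unit_steps_def by blast

lemma adj4_iff_unit_step: "adj4 p q \<longleftrightarrow> q - p \<in> unit_steps"
proof -
  define x y where "x = fst q - fst p" and "y = snd q - snd p"
  have "q - p = (x, y)" by (simp add: x_def y_def prod_eq_iff)
  moreover have "adj4 p q \<longleftrightarrow> \<bar>x\<bar> + \<bar>y\<bar> = 1"
    by (simp add: adj4_def x_def y_def abs_minus_commute)
  moreover have "\<bar>x\<bar> + \<bar>y\<bar> = 1 \<longleftrightarrow> (x, y) \<in> unit_steps"
    by (auto simp: unit_steps_def abs_if)
  ultimately show ?thesis by simp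
qed

lemma uminus_unit_step: "g \<in> unit_steps \<Longrightarrow> - g \<in> unit_steps"
  by (elim unit_steps_cases) (simp_all add: unit_steps_def)

lemma unit_step_neq_uminus: "g \<in> unit_steps \<Longrightarrow> g \<noteq> - g"
  by (elim unit_steps_cases) simp_all

lemma unit_step_remainder: "g \<in> unit_steps \<Longrightarrow> remainder a b g \<in> {a, - a, b, - b}"
  by (elim unit_steps_cases) (simp_all add: remainder_def)

lemma perp_steps_sym: "perp_steps g h \<Longrightarrow> perp_steps h g"
  unfolding perp_steps_def by (metis minus_minus)

lemma perp_steps_cover: "perp_steps g h \<Longrightarrow> z \<in> unit_steps \<Longrightarrow> z \<in> {g, h, - g, - h}"
  unfolding perp_steps_def by (elim conjE unit_steps_cases) (simp_all add: unit_steps_def)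

lemma perp_steps_remainder_abs:
  "perp_steps g h \<Longrightarrow>
     \<bar>remainder a b g\<bar> = \<bar>a\<bar> \<and> \<bar>remainder a b h\<bar> = \<bar>b\<bar> \<or>
     \<bar>remainder a b g\<bar> = \<bar>b\<bar> \<and> \<bar>remainder a b h\<bar> = \<bar>a\<bar>"
  unfolding perp_steps_def by (elim conjE unit_steps_cases) (simp_all add: remainder_def)

lemma perp_steps_span:
  assumes "perp_steps g h"
  obtains i j where "\<And>a b. remainder a b z = i * remainder a b g + j * remainder a b h"
proof
  show "remainder a b z = (fst z * fst g + snd z * snd g) * remainder a b g
                         + (fst z * fst h + snd z * snd h) * remainder a b h" for a b
    using assms unfolding perp_steps_def
    by (elim conjE unit_steps_cases) (simp_all add: remainder_def algebra_simps)
qed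

lemma perp_steps_prescribed_remainders:
  assumes "perp_steps g h"
  obtains a b where "remainder a b g = G" "remainder a b h = H"
    "\<bar>a\<bar> + \<bar>b\<bar> = \<bar>G\<bar> + \<bar>H\<bar>" "coprime G H \<Longrightarrow> coprime a b"
proof
  let ?a = "G * fst g + H * fst h" and ?b = "- (G * snd g + H * snd h)"
  show "remainder ?a ?b g = G" "remainder ?a ?b h = H" "\<bar>?a\<bar> + \<bar>?b\<bar> = \<bar>G\<bar> + \<bar>H\<bar>"
    "coprime G H \<Longrightarrow> coprime ?a ?b"
    using assms unfolding perp_steps_def
    by (elim conjE unit_steps_cases; simp add: remainder_def coprime_commute)+
qed

lemma perp_steps_bezout_line:
  assumes perp: "perp_steps g h" and bezout: "i * remainder a b g + j * remainder a b h = 1"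
  obtains a' b' where "remainder a' b' g = j" "remainder a' b' h = - i"
    "\<bar>a'\<bar> + \<bar>b'\<bar> = \<bar>i\<bar> + \<bar>j\<bar>" "coprime a' b'"
proof -
  have "coprime j (- i)"
  proof (rule coprimeI)
    fix d assume "d dvd j" "d dvd - i"
    then have "d dvd i * remainder a b g + j * remainder a b h" by simp
    then show "is_unit d" using bezout by simp
  qed
  obtain a' b' where "remainder a' b' g = j" "remainder a' b' h = - i"
    "\<bar>a'\<bar> + \<bar>b'\<bar> = \<bar>j\<bar> + \<bar>- i\<bar>" "coprime j (- i) \<Longrightarrow> coprime a' b'"
    by (rule perp_steps_prescribed_remainders[OF perp, of j "- i"]) blast
  then show thesis using \<open>coprime j (- i)\<close> that by (simp add: add.commute)
qed

section \<open>Paths with two kinds of steps\<close>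

lemma remainder_mono_steps:
  assumes "\<And>k. x \<le> k \<Longrightarrow> k < y \<Longrightarrow> 0 \<le> remainder a b (step c k)" and "x \<le> y"
  shows "remainder a b (c x) \<le> remainder a b (c y)"
  using assms(2,1)
proof (induction y rule: int_ge_induct)
  case (step y)
  then show ?case using remainder_succ[of a b c y] by fastforce
qed simp

lemma exists_step_remainder_neg:
  assumes "remainder a b (c y) < remainder a b (c x)" and "x \<le> y"
  obtains k where "x \<le> k" "k < y" "remainder a b (step c k) < 0"
  using remainder_mono_steps[of x y a b c] assms by force

lemma exists_steps_of_both_signs:
  assumes "remainder a b (c q) = remainder a b (c p)" "p < q" "remainder a b (step c p) \<noteq> 0"
  obtains k1 k2 where "p \<le> k1" "k1 < q" "0 < remainder a b (step c k1)"
    "p \<le> k2" "k2 < q" "remainder a b (step c k2) < 0"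
proof (cases "remainder a b (step c p) > 0")
  case True
  then have "remainder a b (c q) < remainder a b (c (p + 1))"
    using remainder_succ[of a b c p] assms(1) by simp
  then obtain k where "p + 1 \<le> k" "k < q" "remainder a b (step c k) < 0"
    using exists_step_remainder_neg assms(2) by (metis add1_zle_eq)
  then show thesis using that[of p k] True assms(2) by simp
next
  case False
  then have neg: "remainder a b (step c p) < 0" using assms(3) by simp
  then have "remainder (- a) (- b) (c q) < remainder (- a) (- b) (c (p + 1))"
    using remainder_succ[of a b c p] assms(1) by simp
  then obtain k where "p + 1 \<le> k" "k < q" "remainder (- a) (- b) (step c k) < 0"
    using exists_step_remainder_neg assms(2) by (metis add1_zle_eq)
  then show thesis using that[of k p] neg assms(2) by simp
qed

lemma remainder_two_step_path:
  assumes "step c ` {x..<y} \<subseteq> {g, h}" and "x \<le> y"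
  obtains j where
    "\<And>a b. remainder a b (c y) = remainder a b (c x) + (y - x - j) * remainder a b g + j * remainder a b h"
proof -
  have "\<exists>j. \<forall>a b. remainder a b (c y) = remainder a b (c x) + (y - x - j) * remainder a b g
                                    + j * remainder a b h"
    using assms(2,1)
  proof (induction y rule: int_ge_induct)
    case base
    show ?case by (intro exI[of _ 0]) simp
  next
    case (step y)
    have "{x..<y} \<subseteq> {x..<y + 1}" "y \<in> {x..<y + 1}" using step.hyps by auto
    then have "step c ` {x..<y} \<subseteq> {g, h}" "step c y \<in> {g, h}" using step.prems by blast+
    then obtain j where j: "\<forall>a b. remainder a b (c y) = remainder a b (c x) + (y - x - j) * remainder a b g
                                                 + j * remainder a b h"
      using step.IH by blast
    from \<open>step c y \<in> {g, h}\<close> have "step c y = g \<or> step c y = h" by simp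
    then show ?case
    proof
      assume "step c y = g"
      then show ?case using j remainder_succ[of _ _ c y] by (intro exI[of _ j]) (simp add: algebra_simps)
    next
      assume "step c y = h"
      then show ?case using j remainder_succ[of _ _ c y] by (intro exI[of _ "j + 1"]) (simp add: algebra_simps)
    qed
  qed
  then show thesis using that by blast
qed

lemma two_step_remainder_cong:
  assumes steps: "step c ` {s..<t} \<subseteq> {g, h}"
    and "s \<le> x" "x \<le> t" "s \<le> y" "y \<le> t"
  shows "(remainder a b g - remainder a b h) dvd
           (remainder a b (c y) - remainder a b (c x) - (y - x) * remainder a b g)"
proof -
  have *: "(remainder a b g - remainder a b h) dvd
             (remainder a b (c v) - remainder a b (c u) - (v - u) * remainder a b g)"
    if uv: "s \<le> u" "u \<le> v" "v \<le> t" for u v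
  proof -
    have "step c ` {u..<v} \<subseteq> {g, h}" by (rule subset_trans[OF image_mono steps]) (use uv in auto)
    then obtain j where "\<And>a b. remainder a b (c v) = remainder a b (c u)
                           + (v - u - j) * remainder a b g + j * remainder a b h"
      using remainder_two_step_path uv(2) by metis
    then have "remainder a b (c v) - remainder a b (c u) - (v - u) * remainder a b g
                 = (remainder a b g - remainder a b h) * - j"
      by (simp add: algebra_simps)
    then show ?thesis by simp
  qed
  show ?thesis
  proof (cases "x \<le> y")
    case True
    then show ?thesis using *[of x y] assms by simp
  next
    case False
    have swap: "remainder a b (c y) - remainder a b (c x) - (y - x) * remainder a b g
            = - (remainder a b (c x) - remainder a b (c y) - (x - y) * remainder a b g)"
      by (simp add: algebra_simps)
    show ?thesis unfolding swap dvd_minus_iff using *[of y x] assms False by simp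
  qed
qed

lemma two_step_remainder_identity:
  assumes "step c ` {x..<y} \<subseteq> {g, h}" and "x \<le> y"
  shows "(remainder a b g - remainder a b h) * (remainder a' b' (c y) - remainder a' b' (c x))
       - (remainder a' b' g - remainder a' b' h) * (remainder a b (c y) - remainder a b (c x))
       = (y - x) * (remainder a b g * remainder a' b' h - remainder a b h * remainder a' b' g)"
proof -
  obtain j where "\<And>a b. remainder a b (c y) = remainder a b (c x) + (y - x - j) * remainder a b g
                                            + j * remainder a b h"
    using remainder_two_step_path[OF assms] by blast
  then have "remainder a b (c y) - remainder a b (c x) = (y - x - j) * remainder a b g + j * remainder a b h"
    "remainder a' b' (c y) - remainder a' b' (c x) = (y - x - j) * remainder a' b' g + j * remainder a' b' h"
    by simp_all
  then show ?thesis by algebra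
qed

lemma two_step_remainder_periodic:
  assumes steps: "step c ` {s..<t} \<subseteq> {g, h}"
    and gh: "remainder a b g - remainder a b h = \<bar>a\<bar> + \<bar>b\<bar>"
    and line: "c ` {s..t} \<subseteq> std_line a b \<mu>"
    and k: "s \<le> k" "k + (\<bar>a\<bar> + \<bar>b\<bar>) \<le> t"
  shows "remainder a b (c (k + (\<bar>a\<bar> + \<bar>b\<bar>))) = remainder a b (c k)"
proof -
  let ?w = "\<bar>a\<bar> + \<bar>b\<bar>" and ?k' = "k + (\<bar>a\<bar> + \<bar>b\<bar>)"
  have "?w dvd (remainder a b (c ?k') - remainder a b (c k) - ?w * remainder a b g)"
    using two_step_remainder_cong[OF steps, of k ?k' a b] k gh by simp
  then have "?w dvd (remainder a b (c ?k') - remainder a b (c k))"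
    by (metis diff_add_cancel dvd_add dvd_triv_left)
  moreover have "k \<in> {s..t}" "?k' \<in> {s..t}" using k by auto
  then have "- ?w < remainder a b (c ?k') - remainder a b (c k)"
    "remainder a b (c ?k') - remainder a b (c k) < ?w"
    using std_line_remainder_bounds[OF line] by fastforce+
  ultimately show ?thesis using dvd_in_window_eq_0 by fastforce
qed

lemma two_step_upper_leaning_iff:
  assumes steps: "step c ` {s..<t} \<subseteq> {g, h}"
    and gh: "remainder a b g - remainder a b h = \<bar>a\<bar> + \<bar>b\<bar>" "coprime (remainder a b g) (\<bar>a\<bar> + \<bar>b\<bar>)"
    and line: "c ` {s..t} \<subseteq> std_line a b \<mu>"
    and p: "s \<le> p" "p \<le> t" "remainder a b (c p) = \<mu>"
    and k: "s \<le> k" "k \<le> t"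
  shows "remainder a b (c k) = \<mu> \<longleftrightarrow> (\<bar>a\<bar> + \<bar>b\<bar>) dvd (k - p)"
proof -
  let ?w = "\<bar>a\<bar> + \<bar>b\<bar>"
  have cong: "?w dvd (remainder a b (c k) - \<mu> - (k - p) * remainder a b g)"
    using two_step_remainder_cong[OF steps p(1,2) k, of a b] p gh by simp
  have "?w dvd (k - p) \<longleftrightarrow> ?w dvd ((k - p) * remainder a b g)"
    using gh(2) by (simp add: coprime_commute coprime_dvd_mult_left_iff)
  also have "\<dots> \<longleftrightarrow> ?w dvd (remainder a b (c k) - \<mu>)"
    using dvd_add_right_iff[OF cong, of "(k - p) * remainder a b g"] by simp
  also have "\<dots> \<longleftrightarrow> remainder a b (c k) = \<mu>"
  proof -
    have "c k \<in> std_line a b \<mu>" using line k by (simp add: image_subset_iff)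
    then show ?thesis
      using dvd_in_window_eq_0[of ?w "remainder a b (c k) - \<mu>"] by (auto simp: mem_std_line_iff)
  qed
  finally show ?thesis ..
qed

lemma two_step_lower_leaning_exists:
  assumes steps: "step c ` {s..<t} \<subseteq> {g, h}"
    and gh: "remainder a b g - remainder a b h = \<bar>a\<bar> + \<bar>b\<bar>" "coprime (remainder a b g) (\<bar>a\<bar> + \<bar>b\<bar>)"
    and line: "c ` {s..t} \<subseteq> std_line a b \<mu>"
    and p: "s \<le> p" "p + \<bar>a\<bar> + \<bar>b\<bar> - 1 \<le> t" "remainder a b (c p) = \<mu>"
  obtains r where "p \<le> r" "r < p + \<bar>a\<bar> + \<bar>b\<bar>" "remainder a b (c r) = \<mu> + \<bar>a\<bar> + \<bar>b\<bar> - 1"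
proof -
  let ?w = "\<bar>a\<bar> + \<bar>b\<bar>" and ?A = "remainder a b g"
  have "?w \<noteq> 0"
  proof
    assume "?w = 0"
    then have "a = 0" "b = 0" by auto
    then show False using gh(2) by (simp add: remainder_def)
  qed
  then have w: "?w \<ge> 1" by linarith
  obtain u v where bezout: "u * ?A + v * ?w = 1"
    using bezout_int[of ?A ?w] gh(2) by auto
  define r where "r = p + (- u) mod ?w"
  have r: "p \<le> r" "r < p + ?w" using w by (simp_all add: r_def)
  have "?w dvd ((r - p) + u)"
    using mod_eq_dvd_iff[of "(- u) mod ?w" ?w "- u"] by (simp add: r_def)
  moreover have "(r - p) * ?A + 1 = ((r - p) + u) * ?A + v * ?w"
    using bezout by (simp add: algebra_simps)
  ultimately have "?w dvd ((r - p) * ?A + 1)" by simp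
  moreover have "?w dvd (remainder a b (c r) - \<mu> - (r - p) * ?A)"
    using two_step_remainder_cong[OF steps, where x=p and y=r and a=a and b=b] p r gh by simp
  moreover have "remainder a b (c r) - (\<mu> + ?w - 1)
                   = (remainder a b (c r) - \<mu> - (r - p) * ?A) + ((r - p) * ?A + 1) - ?w"
    by simp
  ultimately have "?w dvd (remainder a b (c r) - (\<mu> + ?w - 1))"
    by (metis dvd_add dvd_diff dvd_refl)
  moreover have "c r \<in> std_line a b \<mu>" using line r p by (simp add: image_subset_iff)
  ultimately have "remainder a b (c r) = \<mu> + ?w - 1"
    using dvd_in_window_eq_0[of ?w "remainder a b (c r) - (\<mu> + ?w - 1)"]
    by (simp add: mem_std_line_iff)
  with r show thesis using that by simp
qed

lemma last_upper_leaning_near_end: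
  assumes steps: "step c ` {\<pi>..<e} \<subseteq> {g, h}"
    and gh: "remainder a b g - remainder a b h = \<bar>a\<bar> + \<bar>b\<bar>"
    and line: "c ` {\<pi>..e} \<subseteq> std_line a b \<mu>"
    and \<pi>: "\<pi> \<le> e" "remainder a b (c \<pi>) = \<mu>"
    and last: "\<And>k. \<pi> < k \<Longrightarrow> k \<le> e \<Longrightarrow> remainder a b (c k) \<noteq> \<mu>"
  shows "e < \<pi> + (\<bar>a\<bar> + \<bar>b\<bar>)"
proof (rule ccontr)
  assume "\<not> e < \<pi> + (\<bar>a\<bar> + \<bar>b\<bar>)"
  then have "remainder a b (c (\<pi> + (\<bar>a\<bar> + \<bar>b\<bar>))) = \<mu>"
    using two_step_remainder_periodic[OF steps gh line, of \<pi>] \<pi> by simp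
  moreover have "0 < \<bar>a\<bar> + \<bar>b\<bar>" using std_line_remainder_bounds[OF line, of \<pi>] \<pi> by simp
  ultimately show False using last[of "\<pi> + (\<bar>a\<bar> + \<bar>b\<bar>)"] \<open>\<not> e < _\<close> by simp
qed

section \<open>Digital straight segments along a 4-path\<close>

text \<open>A closest pair of opposite steps encloses a run of one perpendicular step; the four
  corners of this detour span more than the width of the strip.\<close>

lemma dss_no_opposite_steps:
  assumes steps: "step c ` {i..<j} \<subseteq> unit_steps"
    and inj: "inj_on c {i..j}"
    and line: "c ` {i..j} \<subseteq> std_line a b \<mu>"
  shows "i \<le> k \<Longrightarrow> k < l \<Longrightarrow> l < j \<Longrightarrow> step c l \<noteq> - step c k"
proof (induction "nat (l - k)" arbitrary: k l rule: less_induct)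
  case less
  have IH: "step c l' \<noteq> - step c k'" if "k \<le> k'" "k' < l'" "l' \<le> l" "l' - k' < l - k" for k' l'
    using less that by auto
  show ?case
  proof
    assume opp: "step c l = - step c k"
    show False
    proof (cases "l = k + 1")
      case True
      then have "c (k + 2) = c k"
        using opp by (simp add: step_def algebra_simps)
      then show False using inj_onD[OF inj] less.prems by fastforce
    next
      case False
      define g where "g = step c k"
      define h where "h = step c (l - 1)"
      have units: "g \<in> unit_steps" "h \<in> unit_steps"
        using steps less.prems False by (simp_all add: image_subset_iff g_def h_def)
      have "h \<noteq> - g" using IH[of k "l - 1"] False less.prems by (auto simp: g_def h_def)
      moreover have "h \<noteq> g" using IH[of "l - 1" l] False less.prems opp by (auto simp: g_def h_def)
      ultimately have perp: "perp_steps g h" using units by (simp add: perp_steps_def)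
      have mid: "step c k' = h" if "k < k'" "k' < l" for k'
      proof -
        have "step c k' \<in> unit_steps" using steps that less.prems by (simp add: image_subset_iff)
        then have "step c k' \<in> {g, h, - g, - h}" by (rule perp_steps_cover[OF perp])
        moreover have "step c k' \<noteq> - g" using IH[of k k'] that by (simp add: g_def)
        moreover have "step c k' \<noteq> g" using IH[of k' l] that opp by (auto simp: g_def)
        moreover have "step c k' \<noteq> - h"
        proof (cases "k' = l - 1")
          case True
          then show ?thesis using units by (auto simp: h_def unit_steps_def)
        next
          case False
          then show ?thesis using IH[of k' "l - 1"] that by (auto simp: h_def)
        qed
        ultimately show ?thesis by blast
      qed
      define X Y where "X = remainder a b g" and "Y = remainder a b h"
      have width: "\<bar>X\<bar> + \<bar>Y\<bar> = \<bar>a\<bar> + \<bar>b\<bar>"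
        using perp_steps_remainder_abs[OF perp, of a b] by (auto simp: X_def Y_def)
      have "step c ` {k + 1..<l} \<subseteq> {h, h}" using mid by auto
      then obtain m where path: "\<And>a b. remainder a b (c l) = remainder a b (c (k + 1))
                                 + (l - (k + 1) - m) * remainder a b h + m * remainder a b h"
        using remainder_two_step_path False less.prems by (metis add1_zle_eq)
      define v Z where "v = remainder a b (c k)" and "Z = (l - k - 1) * Y"
      have "remainder a b (c (k + 1)) = v + X"
        using remainder_succ[of a b c k] by (simp add: v_def X_def g_def)
      moreover have "remainder a b (c l) = v + X + Z"
        using \<open>remainder a b (c (k + 1)) = v + X\<close> path[of a b]
        by (simp add: Y_def Z_def algebra_simps)
      moreover have "remainder a b (c (l + 1)) = v + Z"
        using remainder_succ[of a b c l] opp calculation by (simp add: X_def g_def)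
      moreover have "remainder a b (c x) \<in> {\<mu>..<\<mu> + \<bar>X\<bar> + \<bar>Y\<bar>}" if "x \<in> {k, k + 1, l, l + 1}" for x
        using std_line_remainder_bounds[OF line, of x] that less.prems width by auto
      ultimately have "{v, v + X, v + X + Z, v + Z} \<subseteq> {\<mu>..<\<mu> + \<bar>X\<bar> + \<bar>Y\<bar>}"
        by (metis (no_types, lifting) empty_subsetI insert_iff insert_subset v_def)
      moreover have "0 \<le> Y \<Longrightarrow> Y \<le> Z" "Y \<le> 0 \<Longrightarrow> Z \<le> Y"
        using False less.prems mult_right_mono[of 1 "l - k - 1" Y] mult_right_mono_neg[of 1 "l - k - 1" Y]
        by (auto simp: Z_def)
      ultimately show False by (rule parallelogram_not_in_strip)
    qed
  qed
qed

lemma dss_two_steps: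
  assumes steps: "step c ` {s..<t} \<subseteq> unit_steps"
    and inj: "inj_on c {s..t}"
    and cop: "coprime a b"
    and line: "c ` {s..t} \<subseteq> std_line a b \<mu>"
    and pq: "s \<le> p" "p < q" "q \<le> t" "remainder a b (c p) = \<mu>" "remainder a b (c q) = \<mu>"
    and width: "\<bar>a\<bar> + \<bar>b\<bar> \<ge> 2"
  obtains g h where "perp_steps g h" "remainder a b g > 0" "remainder a b h < 0"
    "remainder a b g - remainder a b h = \<bar>a\<bar> + \<bar>b\<bar>"
    "coprime (remainder a b g) (\<bar>a\<bar> + \<bar>b\<bar>)"
    "step c ` {s..<t} \<subseteq> {g, h}" "g \<in> step c ` {p..<q}" "h \<in> step c ` {p..<q}"
proof -
  note unit = steps_subsetD[OF steps]
  have nonzero: "remainder a b (step c k) \<noteq> 0" if "s \<le> k" "k < t" for k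
    using unit_step_remainder[OF unit[OF that], of a b] coprime_nonzero_of_width[OF cop width] by auto
  obtain k1 k2 where k1: "p \<le> k1" "k1 < q" "remainder a b (step c k1) > 0"
    and k2: "p \<le> k2" "k2 < q" "remainder a b (step c k2) < 0"
    using exists_steps_of_both_signs[of a b c q p] nonzero[of p] pq by auto
  define g h where "g = step c k1" and "h = step c k2"
  have not_opp: "step c k \<noteq> - step c k'" if "s \<le> k" "k < t" "s \<le> k'" "k' < t" "k \<noteq> k'" for k k'
    using dss_no_opposite_steps[OF steps inj line, of k k'] dss_no_opposite_steps[OF steps inj line, of k' k]
      that by (cases "k < k'") (auto simp: minus_equation_iff)
  have units: "g \<in> unit_steps" "h \<in> unit_steps" using unit k1 k2 pq by (simp_all add: g_def h_def)
  have "k1 \<noteq> k2" using k1 k2 by auto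
  then have perp: "perp_steps g h"
    using units not_opp[of k2 k1] k1 k2 pq by (auto simp: perp_steps_def g_def h_def)
  have "step c k \<in> {g, h}" if "s \<le> k" "k < t" for k
  proof -
    have "step c k \<noteq> - g"
      using not_opp[of k k1] unit_step_neq_uminus[OF units(1)] that k1 pq
      by (cases "k = k1") (auto simp: g_def)
    moreover have "step c k \<noteq> - h"
      using not_opp[of k k2] unit_step_neq_uminus[OF units(2)] that k2 pq
      by (cases "k = k2") (auto simp: h_def)
    ultimately show ?thesis using perp_steps_cover[OF perp unit[OF that]] by blast
  qed
  then have two: "step c ` {s..<t} \<subseteq> {g, h}" by (simp add: image_subset_iff)
  have abs: "\<bar>remainder a b g\<bar> = \<bar>a\<bar> \<and> \<bar>remainder a b h\<bar> = \<bar>b\<bar> \<or>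
             \<bar>remainder a b g\<bar> = \<bar>b\<bar> \<and> \<bar>remainder a b h\<bar> = \<bar>a\<bar>"
    by (rule perp_steps_remainder_abs[OF perp])
  then have sum: "remainder a b g - remainder a b h = \<bar>a\<bar> + \<bar>b\<bar>"
    using k1 k2 by (auto simp: g_def h_def)
  have "remainder a b g = \<bar>remainder a b g\<bar>" "- remainder a b h = \<bar>remainder a b h\<bar>"
    using k1 k2 by (simp_all add: g_def h_def)
  then have "coprime (remainder a b g) (- remainder a b h)"
    using abs cop by (metis coprime_abs_left_iff coprime_abs_right_iff coprime_commute)
  then have "coprime (remainder a b g) (\<bar>a\<bar> + \<bar>b\<bar>)"
    using coprime_add_self_int sum by fastforce
  then show thesis
    using that[OF perp _ _ sum _ two] k1 k2 by (force simp: g_def h_def)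
qed

lemma dss_upper_leaning_iff:
  assumes steps: "step c ` {s..<t} \<subseteq> unit_steps"
    and inj: "inj_on c {s..t}"
    and cop: "coprime a b"
    and line: "c ` {s..t} \<subseteq> std_line a b \<mu>"
    and pq: "s \<le> p" "p < q" "q \<le> t" "remainder a b (c p) = \<mu>" "remainder a b (c q) = \<mu>"
    and k: "s \<le> k" "k \<le> t"
  shows "remainder a b (c k) = \<mu> \<longleftrightarrow> (\<bar>a\<bar> + \<bar>b\<bar>) dvd (k - p)"
proof (cases "\<bar>a\<bar> + \<bar>b\<bar> \<ge> 2")
  case True
  obtain g h where "step c ` {s..<t} \<subseteq> {g, h}" "remainder a b g - remainder a b h = \<bar>a\<bar> + \<bar>b\<bar>"
    "coprime (remainder a b g) (\<bar>a\<bar> + \<bar>b\<bar>)"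
    by (rule dss_two_steps[OF steps inj cop line pq True])
  from two_step_upper_leaning_iff[OF this line pq(1) _ pq(4) k] pq(2,3) show ?thesis by simp
next
  case False
  then have "\<bar>a\<bar> + \<bar>b\<bar> = 1" using cop by (cases "a = 0") auto
  moreover have "c k \<in> std_line a b \<mu>" using line k by (simp add: image_subset_iff)
  ultimately show ?thesis by (simp add: mem_std_line_iff)
qed

lemma dss_first_step_in_two_steps:
  assumes steps: "step c ` {i..<j} \<subseteq> unit_steps"
    and inj: "inj_on c {i..j}"
    and line: "c ` {i..j} \<subseteq> std_line a b \<mu>"
    and perp: "perp_steps g h"
    and gh: "g \<in> step c ` {i<..<j}" "h \<in> step c ` {i<..<j}"
  shows "step c i \<in> {g, h}"
proof -
  obtain kg kh where kg: "i < kg" "kg < j" "step c kg = g" and kh: "i < kh" "kh < j" "step c kh = h"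
    using gh by auto
  have "step c i \<in> {g, h, - g, - h}"
    using perp_steps_cover[OF perp] steps_subsetD[OF steps, of i] kg by simp
  moreover have "step c i \<noteq> - g" "step c i \<noteq> - h"
    using dss_no_opposite_steps[OF steps inj line, of i kg] dss_no_opposite_steps[OF steps inj line, of i kh]
      kg kh by (auto simp: minus_equation_iff)
  ultimately show ?thesis by blast
qed

lemma perp_same_sign_steps_not_in_line:
  assumes steps: "step c ` {x..<y} \<subseteq> {g, h}" and perp: "perp_steps g h"
    and same_sign: "0 < remainder a b g * remainder a b h"
    and kl: "x \<le> k" "k < l" "l < y" "step c k = g" "step c l = h"
    and line: "c ` {x..y} \<subseteq> std_line a b \<mu>"
  shows False
proof -
  have width: "\<bar>remainder a b g\<bar> + \<bar>remainder a b h\<bar> = \<bar>a\<bar> + \<bar>b\<bar>" for a b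
    using perp_steps_remainder_abs[OF perp, of a b] by auto
  have pos_case: False
    if pos: "0 < remainder a b g" "0 < remainder a b h" and line: "c ` {x..y} \<subseteq> std_line a b \<mu>"
    for a b \<mu>
  proof -
    have "0 \<le> remainder a b (step c i)" if "x \<le> i" "i < y" for i
      using steps_subsetD[OF steps that] pos by auto
    then have "remainder a b (c x) \<le> remainder a b (c k)"
      "remainder a b (c (k + 1)) \<le> remainder a b (c l)"
      "remainder a b (c (l + 1)) \<le> remainder a b (c y)"
      using kl by (auto intro!: remainder_mono_steps)
    moreover have "remainder a b (c (k + 1)) = remainder a b (c k) + remainder a b g"
      "remainder a b (c (l + 1)) = remainder a b (c l) + remainder a b h"
      using kl remainder_succ[of a b c] by simp_all
    moreover have "c x \<in> std_line a b \<mu>" "c y \<in> std_line a b \<mu>"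
      using line kl by (simp_all add: image_subset_iff)
    ultimately show False
      using width[of a b] pos by (simp add: mem_std_line_iff)
  qed
  show False
  proof (cases "0 < remainder a b g")
    case True
    then show False using pos_case[OF True _ line] same_sign zero_less_mult_pos by blast
  next
    case False
    then have "0 < remainder (- a) (- b) g" "0 < remainder (- a) (- b) h"
      using same_sign by (auto simp: zero_less_mult_iff)
    then show False using pos_case line std_line_uminus by metis
  qed
qed

section \<open>Extending a segment by one point in front\<close>

lemma two_step_increment_gap_same_sign:
  assumes steps: "step c ` {m..<u} \<subseteq> {g, h}" and perp: "perp_steps g h"
    and w: "remainder a b g - remainder a b h = w" "0 < w"
    and ivl: "m \<le> r" "r \<le> u" "m \<le> x" "x \<le> u" "r - m = u - x"
    and gap: "(remainder a b (c r) - remainder a b (c m)) - (remainder a b (c u) - remainder a b (c x)) = 2 * w"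
    and other: "c ` {m..u} \<subseteq> std_line a' b' \<mu>'"
  shows "0 < remainder a' b' g * remainder a' b' h"
proof -
  define G K where "G = remainder a' b' g - remainder a' b' h"
    and "K = remainder a b g * remainder a' b' h - remainder a b h * remainder a' b' g"
  define d1 d2 where "d1 = remainder a b (c r) - remainder a b (c m)"
    and "d2 = remainder a b (c u) - remainder a b (c x)"
  define e1 e2 where "e1 = remainder a' b' (c r) - remainder a' b' (c m)"
    and "e2 = remainder a' b' (c u) - remainder a' b' (c x)"
  have "step c ` {m..<r} \<subseteq> {g, h}"
    by (rule subset_trans[OF image_mono steps]) (use ivl in auto)
  moreover have "step c ` {x..<u} \<subseteq> {g, h}"
    by (rule subset_trans[OF image_mono steps]) (use ivl in auto)
  ultimately have "w * e1 - G * d1 = (r - m) * K" "w * e2 - G * d2 = (r - m) * K"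
    using two_step_remainder_identity[of c m r g h a b a' b']
      two_step_remainder_identity[of c x u g h a b a' b'] ivl w
    by (simp_all add: G_def K_def d1_def d2_def e1_def e2_def)
  then have "w * (e1 - e2) = G * (d1 - d2)" by (simp add: algebra_simps)
  also have "\<dots> = w * (2 * G)" using gap by (simp add: d1_def d2_def)
  finally have "w * (e1 - e2) = w * (2 * G)" .
  then have "e1 - e2 = 2 * G" using w by simp
  have e_bounds: "\<bar>e1\<bar> < \<bar>a'\<bar> + \<bar>b'\<bar>" "\<bar>e2\<bar> < \<bar>a'\<bar> + \<bar>b'\<bar>"
    using std_line_remainder_bounds[OF other, of m] std_line_remainder_bounds[OF other, of r]
      std_line_remainder_bounds[OF other, of x] std_line_remainder_bounds[OF other, of u] ivl
    by (simp_all add: e1_def e2_def abs_less_iff)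
  show ?thesis
  proof (rule ccontr)
    assume "\<not> 0 < remainder a' b' g * remainder a' b' h"
    then have "\<bar>G\<bar> = \<bar>remainder a' b' g\<bar> + \<bar>remainder a' b' h\<bar>"
      by (auto simp: G_def mult_le_0_iff not_less)
    also have "\<dots> = \<bar>a'\<bar> + \<bar>b'\<bar>"
      using perp_steps_remainder_abs[OF perp, of a' b'] by auto
    finally have "\<bar>e1 - e2\<bar> = 2 * (\<bar>a'\<bar> + \<bar>b'\<bar>)" using \<open>e1 - e2 = 2 * G\<close> by simp
    then show False using e_bounds abs_triangle_ineq4[of e1 e2] by (smt (verit))
  qed
qed

text \<open>The subpaths \<open>[m..r]\<close> and \<open>[x..u]\<close> of equal length have remainder increments congruent
  modulo \<open>w\<close>; since the first climbs from below the strip to its top and the second ends at its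
  bottom, the increments differ by exactly \<open>2 w\<close>.\<close>

lemma strongly_exterior_front_not_dss:
  assumes steps: "step c ` {m..<u} \<subseteq> {g, h}" and perp: "perp_steps g h"
    and signs: "0 < remainder a b g" "remainder a b h < 0"
      "remainder a b g - remainder a b h = \<bar>a\<bar> + \<bar>b\<bar>"
    and line: "c ` {m<..u} \<subseteq> std_line a b \<mu>"
    and front: "remainder a b (c m) \<le> \<mu> - 2"
    and lower: "m < r" "r < u" "remainder a b (c r) = \<mu> + \<bar>a\<bar> + \<bar>b\<bar> - 1"
    and upper: "remainder a b (c u) = \<mu>"
    and other: "c ` {m..u} \<subseteq> std_line a' b' \<mu>'"
  shows False
proof -
  define w A where "w = \<bar>a\<bar> + \<bar>b\<bar>" and "A = remainder a b g"
  define l x where "l = r - m" and "x = u - l"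
  have x: "m < x" "x \<le> u" using lower by (simp_all add: l_def x_def)
  have window: "\<mu> \<le> remainder a b (c k) \<and> remainder a b (c k) < \<mu> + w" if "m < k" "k \<le> u" for k
    using std_line_remainder_bounds[OF line] that by (simp add: w_def)
  have "remainder a b (c (m + 1)) = remainder a b (c m) + remainder a b (step c m)"
    by (rule remainder_succ)
  moreover have "step c m \<in> {g, h}" using steps_subsetD[OF steps] lower by simp
  ultimately have first: "step c m = g" and "\<mu> \<le> remainder a b (c m) + A"
    using window[of "m + 1"] front signs lower by (auto simp: A_def)
  define d1 d2 where "d1 = remainder a b (c r) - remainder a b (c m)"
    and "d2 = remainder a b (c u) - remainder a b (c x)"
  have "w dvd (d1 - l * A)" "w dvd (d2 - l * A)"
    using two_step_remainder_cong[OF steps, of m r a b] two_step_remainder_cong[OF steps, of x u a b]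
      lower x signs by (simp_all add: d1_def d2_def l_def x_def A_def w_def)
  then have "w dvd ((d1 - l * A) - (d2 - l * A) - w * 2)" by (rule dvd_diff[OF dvd_diff]) simp
  then have "w dvd ((d1 - d2) - 2 * w)" by (simp add: algebra_simps)
  moreover have "- w < (d1 - d2) - 2 * w" "(d1 - d2) - 2 * w < w"
    using window[of x] x lower upper front \<open>\<mu> \<le> remainder a b (c m) + A\<close> signs
    by (auto simp: d1_def d2_def w_def A_def)
  ultimately have "d1 - d2 = 2 * w" using dvd_in_window_eq_0 by fastforce
  have "d2 < 0"
    using \<open>d1 - d2 = 2 * w\<close> \<open>\<mu> \<le> remainder a b (c m) + A\<close> lower signs
    by (simp add: d1_def w_def A_def)
  then obtain k where k: "x \<le> k" "k < u" "remainder a b (step c k) < 0"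
    using exists_step_remainder_neg[of a b c u x] x by (auto simp: d2_def)
  then have "step c k = h" using steps_subsetD[OF steps, of k] x signs by auto
  have "0 < remainder a' b' g * remainder a' b' h"
    by (rule two_step_increment_gap_same_sign[OF steps perp _ _ _ _ _ _ _ _ other, of a b w r x])
      (use signs lower x \<open>d1 - d2 = 2 * w\<close> in \<open>auto simp: w_def d1_def d2_def l_def x_def\<close>)
  then show False
    using perp_same_sign_steps_not_in_line[OF steps perp _ _ _ _ first \<open>step c k = h\<close> other] k x
    by simp
qed

text \<open>The coefficients of the new line are the coordinates \<open>(i, j)\<close> of \<open>c \<pi> - c m\<close> in the basis
  \<open>g, h\<close>, so that \<open>c m\<close> and the last upper leaning point \<open>c \<pi>\<close> have the same new remainder.\<close>

lemma weakly_exterior_front_extension: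
  assumes steps: "step c ` {m..<e} \<subseteq> {g, h}" and perp: "perp_steps g h"
    and signs: "0 < remainder a b g" "remainder a b h < 0"
      "remainder a b g - remainder a b h = \<bar>a\<bar> + \<bar>b\<bar>"
    and line: "c ` {m<..e} \<subseteq> std_line a b \<mu>"
    and front: "remainder a b (c m) = \<mu> - 1"
    and upper: "m < u" "u \<le> e" "remainder a b (c u) = \<mu>"
  shows "\<exists>a' b' \<mu>'. in_std_line (c ` {m..e}) a' b' \<mu>'"
proof -
  define w A where "w = \<bar>a\<bar> + \<bar>b\<bar>" and "A = remainder a b g"
  obtain \<pi> where \<pi>: "m < \<pi>" "\<pi> \<le> e" "remainder a b (c \<pi>) = \<mu>"
    and last: "\<And>k. \<pi> < k \<Longrightarrow> k \<le> e \<Longrightarrow> remainder a b (c k) \<noteq> \<mu>"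
    using exists_last_in_interval[of m u e "\<lambda>k. remainder a b (c k) = \<mu>"] upper by blast
  have window: "\<mu> \<le> remainder a b (c k) \<and> remainder a b (c k) < \<mu> + w" if "m < k" "k \<le> e" for k
    using std_line_remainder_bounds[OF line] that by (simp add: w_def)
  obtain i j where span: "\<And>a b. remainder a b (c \<pi> - c m) = i * remainder a b g + j * remainder a b h"
    using perp_steps_span[OF perp] by blast
  have bezout: "i * A + j * remainder a b h = 1"
    using span[of a b] \<pi> front by (simp add: A_def algebra_simps)
  obtain a' b' where new: "remainder a' b' g = j" "remainder a' b' h = - i"
    "\<bar>a'\<bar> + \<bar>b'\<bar> = \<bar>i\<bar> + \<bar>j\<bar>" "coprime a' b'"
    using perp_steps_bezout_line[OF perp bezout[unfolded A_def]] by blast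
  have sheared: "w * (remainder a' b' (c k) - remainder a' b' (c m))
                   = (i + j) * (remainder a b (c k) - remainder a b (c m)) - (k - m)"
    if "m \<le> k" "k \<le> e" for k
  proof -
    have "step c ` {m..<k} \<subseteq> {g, h}"
      by (rule subset_trans[OF image_mono steps]) (use that in auto)
    from two_step_remainder_identity[OF this that(1), of a b a' b']
    have "w * (remainder a' b' (c k) - remainder a' b' (c m))
            - (i + j) * (remainder a b (c k) - remainder a b (c m))
          = (k - m) * (- (i * A + j * remainder a b h))"
      using new signs by (simp add: w_def A_def algebra_simps)
    then show ?thesis using bezout by simp
  qed
  have "remainder a' b' (c \<pi>) = remainder a' b' (c m)"
    using span[of a' b'] new by simp
  then have K: "i + j = \<pi> - m" using sheared[of \<pi>] \<pi> front by simp
  have "step c ` {\<pi>..<e} \<subseteq> {g, h}"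
    by (rule subset_trans[OF image_mono steps]) (use \<pi> in auto)
  moreover have "c ` {\<pi>..e} \<subseteq> std_line a b \<mu>"
    by (rule subset_trans[OF image_mono line]) (use \<pi> in auto)
  ultimately have "e < \<pi> + w"
    using last_upper_leaning_near_end[of c \<pi> e g h a b \<mu>] signs \<pi> last by (simp add: w_def)
  have "c k \<in> std_line a' b' (remainder a' b' (c m))" if k: "m \<le> k" "k \<le> e" for k
  proof (cases "k = m")
    case False
    define u where "u = remainder a b (c k) - remainder a b (c m)"
    have "1 \<le> u" "u \<le> w" using window[of k] k False front by (auto simp: u_def)
    moreover have "2 \<le> u \<and> (k - m) - (\<pi> - m) < w" if "\<pi> - m < k - m"
      using window[of k] last[of k] that k \<open>e < \<pi> + w\<close> \<pi> front by (auto simp: u_def)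
    ultimately have "0 \<le> remainder a' b' (c k) - remainder a' b' (c m)"
      "remainder a' b' (c k) - remainder a' b' (c m) < \<pi> - m"
      using sheared_remainder_bounds[OF sheared[OF k, unfolded K u_def[symmetric]]] \<pi> k False
      by auto
    moreover have "\<pi> - m \<le> \<bar>a'\<bar> + \<bar>b'\<bar>" using new(3) K by simp
    ultimately show ?thesis by (simp add: mem_std_line_iff)
  qed (use \<pi> new(3) K in \<open>simp add: mem_std_line_iff\<close>)
  then have "c ` {m..e} \<subseteq> std_line a' b' (remainder a' b' (c m))" by auto
  then show ?thesis using new(4) unfolding in_std_line_def by blast
qed

lemma below_strip_front_extension:
  assumes steps: "step c ` {m..<e} \<subseteq> {g, h}" and perp: "perp_steps g h"
    and signs: "0 < remainder a b g" "remainder a b h < 0"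
      "remainder a b g - remainder a b h = \<bar>a\<bar> + \<bar>b\<bar>"
    and line: "c ` {m<..e} \<subseteq> std_line a b \<mu>"
    and below: "remainder a b (c m) < \<mu>"
    and lower: "m < r" "r < u" "remainder a b (c r) = \<mu> + \<bar>a\<bar> + \<bar>b\<bar> - 1"
    and upper: "u \<le> e" "remainder a b (c u) = \<mu>"
    and other: "c ` {m..u} \<subseteq> std_line a' b' \<mu>'"
  shows "\<exists>a' b' \<mu>'. in_std_line (c ` {m..e}) a' b' \<mu>'"
proof (cases "remainder a b (c m) = \<mu> - 1")
  case True
  show ?thesis
    by (rule weakly_exterior_front_extension[OF steps perp signs line True, of u]) (use lower upper in auto)
next
  case False
  have "step c ` {m..<u} \<subseteq> {g, h}"
    by (rule subset_trans[OF image_mono steps]) (use upper in auto)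
  moreover have "c ` {m<..u} \<subseteq> std_line a b \<mu>"
    by (rule subset_trans[OF image_mono line]) (use upper in auto)
  ultimately have False
    using strongly_exterior_front_not_dss[OF _ perp signs _ _ lower upper(2) other] below False
    by simp
  then show ?thesis ..
qed

text \<open>Above the strip, reflect the line: \<open>std_line_uminus\<close> swaps the roles of upper and lower
  leaning points and of the steps \<open>g\<close> and \<open>h\<close>.\<close>

lemma exterior_front_extension:
  assumes steps: "step c ` {m..<e} \<subseteq> {g, h}" and perp: "perp_steps g h"
    and signs: "0 < remainder a b g" "remainder a b h < 0"
      "remainder a b g - remainder a b h = \<bar>a\<bar> + \<bar>b\<bar>"
    and line: "c ` {m<..e} \<subseteq> std_line a b \<mu>"
    and outside: "c m \<notin> std_line a b \<mu>"
    and leaning: "m < p" "p < r" "r < q" "q \<le> e" "remainder a b (c p) = \<mu>"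
      "remainder a b (c r) = \<mu> + \<bar>a\<bar> + \<bar>b\<bar> - 1" "remainder a b (c q) = \<mu>"
    and other: "c ` {m..q} \<subseteq> std_line a' b' \<mu>'"
  shows "\<exists>a' b' \<mu>'. in_std_line (c ` {m..e}) a' b' \<mu>'"
proof (cases "remainder a b (c m) < \<mu>")
  case True
  show ?thesis
    by (rule below_strip_front_extension[OF steps perp signs line True _ _ _ _ _ other])
      (use leaning in auto)
next
  case False
  define \<nu> where "\<nu> = - \<mu> - \<bar>a\<bar> - \<bar>b\<bar> + 1"
  have "step c ` {m..<e} \<subseteq> {h, g}" using steps by auto
  moreover have "c ` {m<..e} \<subseteq> std_line (- a) (- b) \<nu>"
    using line std_line_uminus[of a b \<mu>] by (simp add: \<nu>_def)
  moreover have "c ` {m..r} \<subseteq> std_line a' b' \<mu>'"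
    by (rule subset_trans[OF image_mono other]) (use leaning in auto)
  ultimately show ?thesis
    using below_strip_front_extension[OF _ perp_steps_sym[OF perp], of c m e "- a" "- b" \<nu> p r]
      signs False outside leaning by (simp add: \<nu>_def mem_std_line_iff)
qed

lemma supporting_dss_front_extension:
  assumes steps: "step c ` {s - 1..<t} \<subseteq> unit_steps"
    and inj: "inj_on c {s - 1..t}"
    and cop: "coprime a b"
    and line: "c ` {s..t} \<subseteq> std_line a b \<mu>"
    and pq: "s \<le> p" "p < q" "q \<le> t" "remainder a b (c p) = \<mu>" "remainder a b (c q) = \<mu>"
    and only: "\<And>k. s \<le> k \<Longrightarrow> k \<le> t \<Longrightarrow> remainder a b (c k) = \<mu> \<Longrightarrow> p \<le> k \<and> k \<le> q"
    and other: "in_std_line (c ` {s - 1..q}) a' b' \<mu>'"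
  shows "\<exists>a'' b'' \<mu>''. in_std_line (c ` {s - 1..t}) a'' b'' \<mu>''"
proof -
  define w where "w = \<bar>a\<bar> + \<bar>b\<bar>"
  have other_line: "c ` {s - 1..q} \<subseteq> std_line a' b' \<mu>'" using other by (simp add: in_std_line_def)
  have steps_st: "step c ` {s..<t} \<subseteq> unit_steps"
    by (rule subset_trans[OF image_mono steps]) auto
  have inj_st: "inj_on c {s..t}" by (rule inj_on_subset[OF inj]) auto
  show ?thesis
  proof (cases "w \<ge> 2")
    case False
    then have "w = 1" using cop by (cases "a = 0") (auto simp: w_def)
    then have "remainder a b (c k) = \<mu>" if "s \<le> k" "k \<le> t" for k
      using std_line_remainder_bounds[OF line, of k] that by (simp add: w_def)
    then have "t \<le> q" using only[of t] pq by simp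
    then show ?thesis using other pq(3) by (metis order_antisym)
  next
    case True
    obtain g h where perp: "perp_steps g h" and signs: "0 < remainder a b g" "remainder a b h < 0"
      "remainder a b g - remainder a b h = w" and cop_gw: "coprime (remainder a b g) w"
      and two: "step c ` {s..<t} \<subseteq> {g, h}" and gh: "g \<in> step c ` {p..<q}" "h \<in> step c ` {p..<q}"
      using dss_two_steps[OF steps_st inj_st cop line pq True[unfolded w_def]] unfolding w_def by blast
    have "step c (s - 1) \<in> {g, h}"
    proof (rule dss_first_step_in_two_steps[OF _ _ other_line perp])
      show "step c ` {s - 1..<q} \<subseteq> unit_steps"
        by (rule subset_trans[OF image_mono steps]) (use pq in auto)
      show "inj_on c {s - 1..q}" by (rule inj_on_subset[OF inj]) (use pq in auto)
      have "step c ` {p..<q} \<subseteq> step c ` {s - 1<..<q}" by (rule image_mono) (use pq in auto)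
      then show "g \<in> step c ` {s - 1<..<q}" "h \<in> step c ` {s - 1<..<q}" using gh by blast+
    qed
    moreover have "{s - 1..<t} = insert (s - 1) {s..<t}" using pq by auto
    ultimately have steps_gh: "step c ` {s - 1..<t} \<subseteq> {g, h}" using two by simp
    have "w dvd (q - p)"
      using dss_upper_leaning_iff[OF steps_st inj_st cop line pq, of q] pq by (simp add: w_def)
    then have "p + w \<le> q" using pq zdvd_imp_le by fastforce
    then have "p + \<bar>a\<bar> + \<bar>b\<bar> - 1 \<le> t" using pq by (simp add: w_def)
    then obtain r where r: "p \<le> r" "r < p + w" "remainder a b (c r) = \<mu> + w - 1"
      unfolding w_def
      by (rule two_step_lower_leaning_exists[OF two signs(3)[unfolded w_def] cop_gw[unfolded w_def]
            line pq(1) _ pq(4)]) (simp add: add.assoc)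
    have "{s - 1<..t} = {s..t}" by auto
    then have line': "c ` {s - 1<..t} \<subseteq> std_line a b \<mu>" using line by simp
    show ?thesis
    proof (cases "c (s - 1) \<in> std_line a b \<mu>")
      case True
      have "{s - 1..t} = insert (s - 1) {s..t}" using pq by auto
      then have "c ` {s - 1..t} \<subseteq> std_line a b \<mu>" using True line by simp
      then show ?thesis using cop by (auto simp: in_std_line_def)
    next
      case False
      have "r \<noteq> p" using r pq \<open>2 \<le> w\<close> by (auto simp: w_def)
      then show ?thesis
        using exterior_front_extension[OF steps_gh perp signs[unfolded w_def] line' False, of p r q]
          r pq \<open>p + w \<le> q\<close> other_line by (simp add: w_def)
    qed
  qed
qed

section \<open>Contours and maximal segments\<close>

lemma contour_periodic:
  assumes "contour \<Gamma> c n"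
  shows "c (i + k * n) = c i"
proof (induction k rule: int_induct[where k = 0])
  case (step1 m)
  have "c (i + (m + 1) * n) = c ((i + m * n) + n)" by (simp add: algebra_simps)
  then show ?case using assms step1 by (simp add: contour_def)
next
  case (step2 m)
  have "c (i + m * n) = c ((i + (m - 1) * n) + n)" by (simp add: algebra_simps)
  then show ?case using assms step2 by (simp add: contour_def)
qed simp

lemma contour_inj_on:
  assumes "contour \<Gamma> c n" and "j - i < n"
  shows "inj_on c {i..j}"
proof (rule inj_onI)
  fix x y
  assume xy: "x \<in> {i..j}" "y \<in> {i..j}" "c x = c y"
  have n: "0 < n" "inj_on c {0..<n}" using assms(1) by (simp_all add: contour_def)
  have "c (x mod n) = c x" "c (y mod n) = c y"
    using contour_periodic[OF assms(1), of "x mod n" "x div n"]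
      contour_periodic[OF assms(1), of "y mod n" "y div n"] by simp_all
  then have "x mod n = y mod n" using inj_onD[OF n(2)] xy(3) n(1) by simp
  then have "n dvd (x - y)" by (simp add: mod_eq_dvd_iff)
  moreover have "- n < x - y" "x - y < n" using xy assms(2) by auto
  ultimately show "x = y" using dvd_in_window_eq_0 by fastforce
qed

lemma contour_step: "contour \<Gamma> c n \<Longrightarrow> step c k \<in> unit_steps"
  unfolding contour_def step_def by (simp add: adj4_iff_unit_step[symmetric])

lemma supporting_dss_length:
  assumes steps: "step c ` {s..<t} \<subseteq> unit_steps"
    and inj: "inj_on c {s..t}"
    and cop: "coprime a b"
    and line: "c ` {s..t} \<subseteq> std_line a b \<mu>"
    and pq: "s \<le> p" "p < q" "q \<le> t" "remainder a b (c p) = \<mu>" "remainder a b (c q) = \<mu>"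
    and only: "\<And>k. s \<le> k \<Longrightarrow> k \<le> t \<Longrightarrow> remainder a b (c k) = \<mu> \<Longrightarrow> p \<le> k \<and> k \<le> q"
    and patterns: "card {k \<in> {p..q}. remainder a b (c k) = \<mu>} = f + 1"
  shows "q - p = int f * (\<bar>a\<bar> + \<bar>b\<bar>)" "t - s \<le> (int f + 2) * (\<bar>a\<bar> + \<bar>b\<bar>) - 2"
proof -
  define w where "w = \<bar>a\<bar> + \<bar>b\<bar>"
  have w: "0 < w" using cop by (cases "a = 0") (auto simp: w_def)
  have upper_iff: "remainder a b (c k) = \<mu> \<longleftrightarrow> w dvd (k - p)" if "s \<le> k" "k \<le> t" for k
    using dss_upper_leaning_iff[OF steps inj cop line pq that] by (simp add: w_def)
  have "w dvd (q - p)" using upper_iff[of q] pq by simp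
  have "{k \<in> {p..q}. remainder a b (c k) = \<mu>} = {k \<in> {p..q}. w dvd (k - p)}"
  proof (rule Collect_cong)
    show "k \<in> {p..q} \<and> remainder a b (c k) = \<mu> \<longleftrightarrow> k \<in> {p..q} \<and> w dvd (k - p)" for k
      using upper_iff[of k] pq by auto
  qed
  then have "int f + 1 = (q - p) div w + 1"
    using card_multiples_atLeastAtMost[OF w \<open>w dvd (q - p)\<close>] patterns pq by simp
  then show qp: "q - p = int f * w" using \<open>w dvd (q - p)\<close> by (simp add: w_def)
  have "p - s < w"
  proof (rule ccontr)
    assume "\<not> p - s < w"
    then have "remainder a b (c (p - w)) = \<mu>" using upper_iff[of "p - w"] pq w by simp
    then show False using only[of "p - w"] \<open>\<not> p - s < w\<close> pq w by simp
  qed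
  moreover have "t - q < w"
  proof (rule ccontr)
    assume "\<not> t - q < w"
    moreover have "w dvd (q + w - p)" using \<open>w dvd (q - p)\<close> by (simp add: diff_add_eq[symmetric])
    ultimately have "remainder a b (c (q + w)) = \<mu>" using upper_iff[of "q + w"] pq w by simp
    then show False using only[of "q + w"] \<open>\<not> t - q < w\<close> pq w by simp
  qed
  ultimately show "t - s \<le> (int f + 2) * w - 2" using qp by (simp add: algebra_simps)
qed

lemma supporting_dss_front_bound:
  assumes steps: "\<And>k. step c k \<in> unit_steps"
    and inj: "\<And>i j. j - i < n \<Longrightarrow> inj_on c {i..j}"
    and cop: "coprime a b"
    and line: "c ` {s1..t1} \<subseteq> std_line a b \<mu>"
    and pq: "s1 \<le> p" "p < q" "q \<le> t1" "remainder a b (c p) = \<mu>" "remainder a b (c q) = \<mu>"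
    and only: "\<And>k. s1 \<le> k \<Longrightarrow> k \<le> t1 \<Longrightarrow> remainder a b (c k) = \<mu> \<Longrightarrow> p \<le> k \<and> k \<le> q"
    and not_dss: "\<not> is_dss c n (s1 - 1) t1"
    and other: "in_std_line (c ` {s..t}) a' b' \<mu>'" "s < s1" "q \<le> t"
  shows "n \<le> t1 - (s1 - 1)"
proof (rule ccontr)
  assume "\<not> n \<le> t1 - (s1 - 1)"
  then have "inj_on c {s1 - 1..t1}" by (intro inj) simp
  moreover have "step c ` {s1 - 1..<t1} \<subseteq> unit_steps" using steps by (simp add: image_subset_iff)
  moreover have "in_std_line (c ` {s1 - 1..q}) a' b' \<mu>'"
    by (rule in_std_line_subset[OF other(1)]) (intro image_mono, use other(2,3) in auto)
  ultimately have "\<exists>a'' b'' \<mu>''. in_std_line (c ` {s1 - 1..t1}) a'' b'' \<mu>''"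
    using supporting_dss_front_extension[OF _ _ cop line pq only] by blast
  then show False using not_dss \<open>\<not> n \<le> t1 - (s1 - 1)\<close> pq by (auto simp: is_dss_def)
qed

lemma maximal_segment_containing_supporting_dss:
  assumes contour: "contour \<Gamma> c n"
    and ms1: "maximal_segment c n s1 t1"
    and cop: "coprime a b"
    and line: "c ` {s1..t1} \<subseteq> std_line a b \<mu>"
    and pq: "s1 \<le> p" "p < q" "q \<le> t1" "remainder a b (c p) = \<mu>" "remainder a b (c q) = \<mu>"
    and only: "\<And>k. s1 \<le> k \<Longrightarrow> k \<le> t1 \<Longrightarrow> remainder a b (c k) = \<mu> \<Longrightarrow> p \<le> k \<and> k \<le> q"
    and ms: "maximal_segment c n s t" "s \<le> p" "q \<le> t"
  shows "t - s \<le> t1 - s1"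
proof -
  obtain a' b' \<mu>' where other: "in_std_line (c ` {s..t}) a' b' \<mu>'" and "t - s < n"
    using ms(1) by (auto simp: maximal_segment_def is_dss_def)
  have inj: "inj_on c {i..j}" if "j - i < n" for i j
    using contour_inj_on[OF contour that] .
  consider "s < s1" | "t1 < t" | "s1 \<le> s" "t \<le> t1" by linarith
  then show ?thesis
  proof cases
    case 1
    have "\<not> is_dss c n (s1 - 1) t1" using ms1 by (simp add: maximal_segment_def)
    then have "n \<le> t1 - (s1 - 1)"
      using supporting_dss_front_bound[OF contour_step[OF contour] inj cop line pq only _ other \<open>s < s1\<close> ms(3)] by blast
    then show ?thesis using \<open>t - s < n\<close> by simp
  next
    case 2
    let ?c = "\<lambda>k. c (- k)"
    have "step ?c k \<in> unit_steps" for k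
      using uminus_unit_step[OF contour_step[OF contour, of "- k - 1"]] by (simp add: step_def)
    moreover have "inj_on ?c {i..j}" if "j - i < n" for i j
    proof -
      have "inj_on c (uminus ` {i..j})" using inj[where i="- j" and j="- i"] that by simp
      then have "inj_on (c \<circ> uminus) {i..j}" by (rule comp_inj_on[rotated]) (simp add: inj_on_def)
      then show ?thesis by (simp add: comp_def)
    qed
    moreover have "\<not> is_dss ?c n (- t1 - 1) (- s1)"
      using ms1 by (simp add: maximal_segment_def is_dss_def image_reflect_atLeastAtMost add.commute)
    moreover have "in_std_line (?c ` {- t..- s}) a' b' \<mu>'"
      using other by (simp add: image_reflect_atLeastAtMost)
    moreover have "remainder a b (?c k) = \<mu> \<Longrightarrow> - q \<le> k \<and> k \<le> - p"
      if "- t1 \<le> k" "k \<le> - s1" for k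
      using only[of "- k"] that by auto
    ultimately have "n \<le> - s1 - (- t1 - 1)"
      using supporting_dss_front_bound[of ?c n a b "- t1" "- s1" \<mu> "- q" "- p" "- t" "- s"]
        cop line pq ms(2,3) 2 by (simp add: image_reflect_atLeastAtMost)
    then show ?thesis using \<open>t - s < n\<close> by simp
  qed simp
qed

theorem proposition4:
  fixes \<Gamma> V :: "pt set" and c :: "int \<Rightarrow> pt" and n p q a b \<mu> s t :: int and f :: nat
  assumes "cdp \<Gamma>"
    and "vertex_set \<Gamma> V"
    and "contour \<Gamma> c n"
    and "supporting_edge V c n p q a b \<mu>"
    and "made_of_patterns c p q a b \<mu> f"
    and "maximal_segment c n s t" and "s \<le> p" and "q \<le> t"
  shows "L1 p q \<le> L1 s t \<and> L1 s t \<le> (real f + 2) / real f * L1 p q - 2 \<and>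
         L1 s t / 3 \<le> L1 p q \<and> L1 p q \<le> L1 s t \<and> L1 s t \<le> 3 * L1 p q"
proof -
  obtain s1 t1 where ms1: "maximal_segment c n s1 t1" and "oriented_char_line c s1 t1 a b \<mu>"
    and pq: "s1 \<le> p" "q \<le> t1" "remainder a b (c p) = \<mu>" "remainder a b (c q) = \<mu>" "p < q"
    and only: "\<And>k. s1 \<le> k \<Longrightarrow> k \<le> t1 \<Longrightarrow> remainder a b (c k) = \<mu> \<Longrightarrow> p \<le> k \<and> k \<le> q"
    using assms(4) by (auto simp: supporting_edge_def digital_edge_def upper_leaning_iff_remainder)
  then have cop: "coprime a b" and line: "c ` {s1..t1} \<subseteq> std_line a b \<mu>"
    by (simp_all add: oriented_char_line_def char_line_def in_std_line_def)
  have "step c ` {s1..<t1} \<subseteq> unit_steps" using contour_step[OF assms(3)] by auto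
  moreover have "inj_on c {s1..t1}"
    using contour_inj_on[OF assms(3)] ms1 by (simp add: maximal_segment_def is_dss_def)
  moreover have "card {k \<in> {p..q}. remainder a b (c k) = \<mu>} = f + 1"
    using assms(5) by (simp add: made_of_patterns_def upper_leaning_iff_remainder)
  ultimately have "q - p = int f * (\<bar>a\<bar> + \<bar>b\<bar>)" "t1 - s1 \<le> (int f + 2) * (\<bar>a\<bar> + \<bar>b\<bar>) - 2"
    using supporting_dss_length[OF _ _ cop line _ pq(5) pq(2-4) only] pq(1) by blast+
  moreover have "t - s \<le> t1 - s1"
    using maximal_segment_containing_supporting_dss[OF assms(3) ms1 cop line pq(1,5,2,3,4) only assms(6-8)] .
  ultimately show ?thesis
    unfolding L1_def by (intro length_ratio_bounds) (use pq assms(7,8) in auto)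
qed

end
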